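(* Let $G$ be a finite graph and $\ell$ a $\mathbb{Z}_2^2$-cordial labeling of $G$. Then for every bijection $\varphi:\mathbb{Z}_2^2\to\mathbb{Z}_2^2$ with $\varphi(0)=0$, the labeling $\varphi\circ\ell$ is also a $\mathbb{Z}_2^2$-cordial labeling of $G$.
   Context: $\mathbb{Z}_2^2=\mathbb{Z}_2\times\mathbb{Z}_2$ is the Klein four-group. For an abelian group $A$ and a graph $G=(V,E)$, a vertex labeling $\ell:V\to A$ induces an edge labeling $\ell(\{v_1,v_2\})=\ell(v_1)+\ell(v_2)$. Let $f_V(a)=|\{v\in V:\ell(v)=a\}|$ and $f_E(a)=|\{e\in E:\ell(e)=a\}|$. The labeling is $A$-cordial if $|f_V(a_1)-f_V(a_2)|\le 1$ and $|f_E(a_1)-f_E(a_2)|\le 1$ for all $a_1,a_2\in A$. *)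

theory Defs
  imports Main
begin

text \<open>The Klein four-group Z_2 x Z_2, represented as bool x bool with
  componentwise exclusive-or as the group operation and (False, False) as 0.\<close>

type_synonym k4 = "bool \<times> bool"

definition k4_zero :: k4 where
  "k4_zero = (False, False)"

definition k4_add :: "k4 \<Rightarrow> k4 \<Rightarrow> k4" where
  "k4_add x y = (fst x \<noteq> fst y, snd x \<noteq> snd y)"

definition finite_graph :: "'v set \<Rightarrow> 'v set set \<Rightarrow> bool" where
  "finite_graph V E \<longleftrightarrow> finite V \<and>
     (\<forall>e\<in>E. \<exists>u v. u \<in> V \<and> v \<in> V \<and> u \<noteq> v \<and> e = {u, v})"

definition vcount :: "'v set \<Rightarrow> ('v \<Rightarrow> k4) \<Rightarrow> k4 \<Rightarrow> nat" where
  "vcount V l a = card {v \<in> V. l v = a}"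

definition ecount :: "'v set set \<Rightarrow> ('v \<Rightarrow> k4) \<Rightarrow> k4 \<Rightarrow> nat" where
  "ecount E l a = card {e \<in> E. \<exists>u v. e = {u, v} \<and> k4_add (l u) (l v) = a}"

definition k4_cordial :: "'v set \<Rightarrow> 'v set set \<Rightarrow> ('v \<Rightarrow> k4) \<Rightarrow> bool" where
  "k4_cordial V E l \<longleftrightarrow>
     (\<forall>a1 a2. \<bar>int (vcount V l a1) - int (vcount V l a2)\<bar> \<le> 1) \<and>
     (\<forall>a1 a2. \<bar>int (ecount E l a1) - int (ecount E l a2)\<bar> \<le> 1)"

end

theory Submission
  imports Defs
begin

(* A bijection of Z_2^2 fixing 0 is a group automorphism, because the addition of the Klein
   four-group is expressible through equality and 0 alone: x + x = 0, x + 0 = x, and the sum of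
   two distinct nonzero elements is the third nonzero element. Hence the edge labels induced by
   \<phi> \<circ> l are the images under \<phi> of those induced by l, so both label-count functions of
   \<phi> \<circ> l are those of l reindexed by inv \<phi>; the cordiality conditions, which compare all
   pairs of counts, are invariant under such a reindexing. *)

lemma k4_add_eq_iff:
  "k4_add x y = z \<longleftrightarrow>
     (x = y \<and> z = k4_zero) \<or> (x = k4_zero \<and> z = y) \<or> (y = k4_zero \<and> z = x) \<or>
     distinct [x, y, z, k4_zero]"
  by (cases x; cases y; cases z) (auto simp: k4_add_def k4_zero_def)

lemma k4_add_inj_zero_fixing:
  assumes "inj \<phi>" and "\<phi> k4_zero = k4_zero"
  shows "\<phi> (k4_add x y) = k4_add (\<phi> x) (\<phi> y)"
proof -
  have zero_iff: "\<phi> a = k4_zero \<longleftrightarrow> a = k4_zero" for a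
    using assms by (metis injD)
  have "k4_add (\<phi> x) (\<phi> y) = \<phi> z \<longleftrightarrow> k4_add x y = z" for z
    using assms(1) zero_iff by (simp add: k4_add_eq_iff inj_eq)
  from this[of "k4_add x y"] show ?thesis by simp
qed

lemma vcount_comp_bij:
  assumes "bij \<phi>"
  shows "vcount V (\<phi> \<circ> l) a = vcount V l (inv \<phi> a)"
  using assms by (simp add: vcount_def bij_inv_eq_iff eq_commute[of a])

lemma ecount_comp_bij:
  assumes "bij \<phi>" and "\<phi> k4_zero = k4_zero"
  shows "ecount E (\<phi> \<circ> l) a = ecount E l (inv \<phi> a)"
proof -
  have "k4_add (\<phi> (l u)) (\<phi> (l v)) = a \<longleftrightarrow> k4_add (l u) (l v) = inv \<phi> a" for u v
    using assms by (metis k4_add_inj_zero_fixing bij_is_inj bij_inv_eq_iff)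
  then show ?thesis
    by (simp add: ecount_def)
qed

lemma k4_cordial_reindex:
  assumes "k4_cordial V E l"
    and "\<And>a. vcount V l' a = vcount V l (\<sigma> a)"
    and "\<And>a. ecount E l' a = ecount E l (\<sigma> a)"
  shows "k4_cordial V E l'"
  using assms(1) unfolding k4_cordial_def assms(2,3) by blast

theorem lemma4p2:
  fixes V :: "'v set" and E :: "'v set set" and l :: "'v \<Rightarrow> k4" and \<phi> :: "k4 \<Rightarrow> k4"
  assumes "finite_graph V E"
    and "k4_cordial V E l"
    and "bij \<phi>"
    and "\<phi> k4_zero = k4_zero"
  shows "k4_cordial V E (\<phi> \<circ> l)"
  using assms(2) vcount_comp_bij[OF assms(3)] ecount_comp_bij[OF assms(3,4)]
  by (rule k4_cordial_reindex)

end
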